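(* Let $G$ be a connected graph of order $n \ge 2$, and let $k$ be a positive integer. Then $\dim_{k,f}(G)=\frac{n}{2}$ if and only if $G \in H[\mathcal{K} \cup \overline{\mathcal{K}}]$ for some connected graph $H$.
   Context: All graphs are finite, simple, undirected and connected. $d(x,y)$ is the length of a shortest $x$–$y$ path in $G$. For a positive integer $k$, $d_k(x,y)=\min\{d(x,y),k+1\}$ and $R_k\{x,y\}=\{z\in V(G): d_k(x,z)\neq d_k(y,z)\}$. For a function $g$ on $V(G)$ and $U\subseteq V(G)$, $g(U)=\sum_{s\in U}g(s)$. A function $h:V(G)\to[0,1]$ is a $k$-truncated resolving function of $G$ if $h(R_k\{x,y\})\ge 1$ for all distinct $x,y\in V(G)$; $\dim_{k,f}(G)$ is the minimum of $h(V(G))$ over all such $h$. Let $\mathcal{K}=\{K_a: a\ge 2\}$ and $\overline{\mathcal{K}}=\{\overline{K}_b: b\ge 2\}$. For a connected graph $H$, $H[\mathcal{K}\cup\overline{\mathcal{K}}]$ is the family of graphs obtained from $H$ by replacing each vertex $u_i\in V(H)$ by a graph $H_i\in\mathcal{K}\cup\overline{\mathcal{K}}$, where each vertex of $H_i$ is adjacent to each vertex of $H_j$ ($i\neq j$) if and only if $u_iu_j\in E(H)$. *)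

theory Defs
  imports Complex_Main
begin

definition simple_graph :: "'a set \<Rightarrow> ('a \<Rightarrow> 'a \<Rightarrow> bool) \<Rightarrow> bool" where
  "simple_graph V E \<longleftrightarrow> finite V \<and> (\<forall>x y. E x y \<longrightarrow> x \<in> V \<and> y \<in> V)
     \<and> (\<forall>x y. E x y \<longrightarrow> E y x) \<and> (\<forall>x. \<not> E x x)"

definition walk_of_length :: "'a set \<Rightarrow> ('a \<Rightarrow> 'a \<Rightarrow> bool) \<Rightarrow> 'a \<Rightarrow> 'a \<Rightarrow> nat \<Rightarrow> bool" where
  "walk_of_length V E x y n \<longleftrightarrow> (\<exists>p. length p = Suc n \<and> hd p = x \<and> last p = y \<and> set p \<subseteq> V
      \<and> (\<forall>i<n. E (p ! i) (p ! Suc i)))"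

definition graph_connected :: "'a set \<Rightarrow> ('a \<Rightarrow> 'a \<Rightarrow> bool) \<Rightarrow> bool" where
  "graph_connected V E \<longleftrightarrow> V \<noteq> {} \<and> (\<forall>x\<in>V. \<forall>y\<in>V. \<exists>n. walk_of_length V E x y n)"

definition gdist :: "'a set \<Rightarrow> ('a \<Rightarrow> 'a \<Rightarrow> bool) \<Rightarrow> 'a \<Rightarrow> 'a \<Rightarrow> nat" where
  "gdist V E x y = (LEAST n. walk_of_length V E x y n)"

definition tdist :: "nat \<Rightarrow> 'a set \<Rightarrow> ('a \<Rightarrow> 'a \<Rightarrow> bool) \<Rightarrow> 'a \<Rightarrow> 'a \<Rightarrow> nat" where
  "tdist k V E x y = min (gdist V E x y) (k + 1)"

definition resolving_set_k :: "nat \<Rightarrow> 'a set \<Rightarrow> ('a \<Rightarrow> 'a \<Rightarrow> bool) \<Rightarrow> 'a \<Rightarrow> 'a \<Rightarrow> 'a set" where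
  "resolving_set_k k V E x y = {z \<in> V. tdist k V E x z \<noteq> tdist k V E y z}"

definition k_trunc_resolving_function :: "nat \<Rightarrow> 'a set \<Rightarrow> ('a \<Rightarrow> 'a \<Rightarrow> bool) \<Rightarrow> ('a \<Rightarrow> real) \<Rightarrow> bool" where
  "k_trunc_resolving_function k V E h \<longleftrightarrow> (\<forall>v\<in>V. 0 \<le> h v \<and> h v \<le> 1)
     \<and> (\<forall>x\<in>V. \<forall>y\<in>V. x \<noteq> y \<longrightarrow> sum h (resolving_set_k k V E x y) \<ge> 1)"

definition frac_trunc_dim :: "nat \<Rightarrow> 'a set \<Rightarrow> ('a \<Rightarrow> 'a \<Rightarrow> bool) \<Rightarrow> real" where
  "frac_trunc_dim k V E = Inf {sum h V | h. k_trunc_resolving_function k V E h}"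

text \<open>G belongs to H[K \<union> Kbar] for some connected graph H: there is a connected graph H
  and a map phi from V(G) onto V(H) whose fibres (the replaced vertices) have size at least 2,
  each fibre inducing a complete or an edgeless graph, and vertices in distinct fibres
  adjacent iff their fibres are adjacent in H.  (Vertices of H are labelled by elements of 'a,
  which is no loss since |V(H)| \<le> |V(G)|.)\<close>
definition in_blowup_family :: "'a set \<Rightarrow> ('a \<Rightarrow> 'a \<Rightarrow> bool) \<Rightarrow> bool" where
  "in_blowup_family V E \<longleftrightarrow> (\<exists>VH EH (\<phi>::'a \<Rightarrow> 'a).
      simple_graph VH EH \<and> graph_connected VH EH \<and> \<phi> ` V = VH
      \<and> (\<forall>u\<in>VH. card {x\<in>V. \<phi> x = u} \<ge> 2
            \<and> ((\<forall>x\<in>V. \<forall>y\<in>V. \<phi> x = u \<and> \<phi> y = u \<and> x \<noteq> y \<longrightarrow> E x y)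
               \<or> (\<forall>x\<in>V. \<forall>y\<in>V. \<phi> x = u \<and> \<phi> y = u \<longrightarrow> \<not> E x y)))
      \<and> (\<forall>x\<in>V. \<forall>y\<in>V. \<phi> x \<noteq> \<phi> y \<longrightarrow> (E x y \<longleftrightarrow> EH (\<phi> x) (\<phi> y))))"

end

theory Submission
  imports Defs
begin

text \<open>Call x \<noteq> y twins if N(x) - {y} = N(y) - {x}. Twins are at equal distance from every other
  vertex, so R_k{x,y} = {x,y} and every k-truncated resolving function gives them total weight
  at least 1. If every vertex has a twin, matching the vertices of weight below 1/2 injectively
  with twins shows h(V) \<ge> n/2, and the constant 1/2 attains this. If some vertex has no twin,
  weight 1/3 on twin-free vertices and 1/2 elsewhere still resolves, because for k \<ge> 1 a
  pair of non-twins is also resolved by a third vertex adjacent to exactly one of them; so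
  dim_{k,f}(G) < n/2. Finally, every vertex has a twin exactly when G is a blow-up
  H[K \<union> Kbar]: the twin classes are cliques or independent sets, and they are the
  blown-up vertices.\<close>

lemma simple_graphD:
  assumes "simple_graph V E"
  shows "finite V" and "E x y \<Longrightarrow> x \<in> V" and "E x y \<Longrightarrow> y \<in> V"
    and "E x y \<Longrightarrow> E y x" and "\<not> E x x"
  using assms unfolding simple_graph_def by blast+

lemma walk_of_length_iff_relpowp:
  assumes G: "simple_graph V E"
  shows "walk_of_length V E x y n \<longleftrightarrow> x \<in> V \<and> (E ^^ n) x y"
proof
  assume "walk_of_length V E x y n"
  then obtain p where p: "length p = Suc n" "hd p = x" "last p = y" "set p \<subseteq> V"
    "\<forall>i<n. E (p ! i) (p ! Suc i)" unfolding walk_of_length_def by blast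
  then have "p \<noteq> []" "p ! 0 = x" "p ! n = y"
    by (auto simp: hd_conv_nth last_conv_nth simp flip: length_greater_0_conv)
  then show "x \<in> V \<and> (E ^^ n) x y"
    using p(2,4,5) unfolding relpowp_fun_conv by auto
next
  assume "x \<in> V \<and> (E ^^ n) x y"
  then obtain f where "x \<in> V" "f 0 = x" "f n = y" and f: "\<forall>i<n. E (f i) (f (Suc i))"
    unfolding relpowp_fun_conv by blast
  moreover have "f i \<in> V" if "i \<le> n" for i
    using that \<open>f 0 = x\<close> \<open>x \<in> V\<close> f simple_graphD(3)[OF G]
    by (cases i) (auto dest: Suc_le_lessD)
  ultimately show "walk_of_length V E x y n"
    unfolding walk_of_length_def
    by (intro exI[of _ "map f [0..<Suc n]"])
       (auto simp: hd_map last_map nth_append simp del: upt_Suc)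
qed

lemma graph_connected_iff_rtranclp:
  assumes "simple_graph V E"
  shows "graph_connected V E \<longleftrightarrow> V \<noteq> {} \<and> (\<forall>x\<in>V. \<forall>y\<in>V. E\<^sup>*\<^sup>* x y)"
  unfolding graph_connected_def walk_of_length_iff_relpowp[OF assms] rtranclp_power by blast

lemma gdist_eq_Least_relpowp:
  assumes "simple_graph V E" and "x \<in> V"
  shows "gdist V E x y = (LEAST n. (E ^^ n) x y)"
  unfolding gdist_def walk_of_length_iff_relpowp[OF assms(1)] using assms(2) by simp

lemma relpowp_gdist:
  assumes "simple_graph V E" and "x \<in> V" and "(E ^^ n) x y"
  shows "(E ^^ gdist V E x y) x y"
  using assms(3) unfolding gdist_eq_Least_relpowp[OF assms(1,2)] by (rule LeastI)

lemma gdist_le: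
  assumes "simple_graph V E" and "x \<in> V" and "(E ^^ n) x y"
  shows "gdist V E x y \<le> n"
  using assms(3) unfolding gdist_eq_Least_relpowp[OF assms(1,2)] by (rule Least_le)

lemma gdist_self:
  assumes "simple_graph V E" and "x \<in> V"
  shows "gdist V E x x = 0"
  using gdist_le[OF assms, of 0] by simp

lemma relpowp_gdist_connected:
  assumes "simple_graph V E" and "graph_connected V E" and "x \<in> V" and "y \<in> V"
  shows "(E ^^ gdist V E x y) x y"
  using assms graph_connected_iff_rtranclp[OF assms(1)] rtranclp_power relpowp_gdist by metis

lemma gdist_eq_1_iff:
  assumes G: "simple_graph V E" and "graph_connected V E" and "x \<in> V" and "y \<in> V"
  shows "gdist V E x y = 1 \<longleftrightarrow> E x y"
proof
  assume "E x y"
  then have "(E ^^ 1) x y" and "x \<noteq> y"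
    using simple_graphD(5)[OF G] by auto
  then show "gdist V E x y = 1"
    using gdist_le[OF G \<open>x \<in> V\<close>] relpowp_gdist[OF G \<open>x \<in> V\<close>]
    by (metis One_nat_def le_Suc_eq le_zero_eq relpowp_0_E)
qed (use relpowp_gdist_connected[OF assms] in auto)

lemma gdist_eq_0_iff:
  assumes "simple_graph V E" and "graph_connected V E" and "x \<in> V" and "y \<in> V"
  shows "gdist V E x y = 0 \<longleftrightarrow> x = y"
  using relpowp_gdist_connected[OF assms] gdist_self[OF assms(1,3)] by auto

text \<open>Taken reflexive on V, so that it is an equivalence relation; the paper's twins are the
  distinct pairs.\<close>
definition twins :: "'a set \<Rightarrow> ('a \<Rightarrow> 'a \<Rightarrow> bool) \<Rightarrow> 'a \<Rightarrow> 'a \<Rightarrow> bool" where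
  "twins V E x y \<longleftrightarrow> x \<in> V \<and> y \<in> V \<and> (\<forall>z\<in>V. z \<noteq> x \<and> z \<noteq> y \<longrightarrow> (E x z \<longleftrightarrow> E y z))"

lemma twinsD: "twins V E x y \<Longrightarrow> x \<in> V" "twins V E x y \<Longrightarrow> y \<in> V"
  unfolding twins_def by blast+

lemma twins_refl: "x \<in> V \<Longrightarrow> twins V E x x"
  unfolding twins_def by blast

lemma twins_sym: "twins V E x y \<Longrightarrow> twins V E y x"
  unfolding twins_def by blast

lemma twins_trans:
  assumes G: "simple_graph V E" and "twins V E x y" and "twins V E y z"
  shows "twins V E x z"
proof (cases "x = y \<or> y = z \<or> x = z")
  case False
  then have "E x y \<longleftrightarrow> E z y"
    using assms simple_graphD(4)[OF G] unfolding twins_def by metis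
  then show ?thesis
    using assms False unfolding twins_def by metis
qed (use assms in \<open>auto simp: twins_def\<close>)

text \<open>A shortest x-z path may be rerouted through the twin y of x.\<close>
lemma gdist_twins:
  assumes G: "simple_graph V E" and C: "graph_connected V E" and "twins V E x y"
    and "z \<in> V" and "z \<noteq> x" and "z \<noteq> y"
  shows "gdist V E x z = gdist V E y z"
proof -
  have le: "gdist V E b z \<le> gdist V E a z"
    if t: "twins V E a b" and "z \<noteq> a" "z \<noteq> b" for a b
  proof -
    have "a \<in> V" "b \<in> V" using twinsD[OF t] .
    then obtain m where m: "gdist V E a z = Suc m"
      using gdist_eq_0_iff[OF G C _ \<open>z \<in> V\<close>] \<open>z \<noteq> a\<close> not0_implies_Suc by metis
    then obtain w where "E a w" and w: "(E ^^ m) w z"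
      using relpowp_gdist_connected[OF G C \<open>a \<in> V\<close> \<open>z \<in> V\<close>] relpowp_Suc_D2 by metis
    show ?thesis
    proof (cases "w = b")
      case True
      then show ?thesis using gdist_le[OF G \<open>b \<in> V\<close> w[unfolded True]] m by simp
    next
      case False
      have "w \<noteq> a" "w \<in> V" using \<open>E a w\<close> simple_graphD[OF G] by metis+
      then have "E b w" using t False \<open>E a w\<close> unfolding twins_def by blast
      then have "(E ^^ Suc m) b z" using w relpowp_Suc_I2 by metis
      then show ?thesis using gdist_le[OF G \<open>b \<in> V\<close>] m by metis
    qed
  qed
  show ?thesis using le[OF assms(3)] le[OF twins_sym[OF assms(3)]] assms(5,6) by fastforce
qed

lemma resolving_set_k_subset: "resolving_set_k k V E x y \<subseteq> V"
  unfolding resolving_set_k_def by auto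

lemma resolving_set_k_twins:
  assumes "simple_graph V E" and "graph_connected V E" and "twins V E x y"
  shows "resolving_set_k k V E x y \<subseteq> {x, y}"
proof
  fix z assume "z \<in> resolving_set_k k V E x y"
  then show "z \<in> {x, y}"
    using gdist_twins[OF assms, of z] unfolding resolving_set_k_def tdist_def
    by (cases "z = x"; cases "z = y") auto
qed

lemma mem_resolving_set_k:
  assumes "simple_graph V E" and "graph_connected V E" and "x \<in> V" and "y \<in> V" and "x \<noteq> y"
  shows "x \<in> resolving_set_k k V E x y" and "y \<in> resolving_set_k k V E x y"
proof -
  have "gdist V E x y \<noteq> 0" "gdist V E y x \<noteq> 0"
    using gdist_eq_0_iff[OF assms(1,2)] assms(3-5) by auto
  then show "x \<in> resolving_set_k k V E x y" "y \<in> resolving_set_k k V E x y"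
    using gdist_self[OF assms(1)] assms(3,4) unfolding resolving_set_k_def tdist_def
    by (auto simp: min_def)
qed

text \<open>A vertex z adjacent to exactly one of x and y is at distance 1 from it and at distance
  at least 2 from the other; truncation at k + 1 \<ge> 2 keeps these apart.\<close>
lemma resolving_set_k_non_twins:
  assumes G: "simple_graph V E" and C: "graph_connected V E" and "k \<ge> 1"
    and "x \<in> V" and "y \<in> V" and "\<not> twins V E x y"
  obtains z where "z \<in> resolving_set_k k V E x y" and "z \<noteq> x" and "z \<noteq> y"
proof -
  obtain z where z: "z \<in> V" "z \<noteq> x" "z \<noteq> y" and "E x z \<noteq> E y z"
    using assms(4-6) unfolding twins_def by blast
  moreover have "gdist V E x z \<noteq> 0" "gdist V E y z \<noteq> 0"
    using gdist_eq_0_iff[OF G C] z assms(4,5) by auto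
  ultimately have "gdist V E x z = 1 \<and> gdist V E y z \<ge> 2 \<or> gdist V E y z = 1 \<and> gdist V E x z \<ge> 2"
    using gdist_eq_1_iff[OF G C] assms(4,5) by fastforce
  then have "tdist k V E x z \<noteq> tdist k V E y z"
    using \<open>k \<ge> 1\<close> unfolding tdist_def by auto
  then show ?thesis using that z unfolding resolving_set_k_def by blast
qed

lemma k_trunc_resolving_function_twins:
  assumes "simple_graph V E" and "graph_connected V E"
    and h: "k_trunc_resolving_function k V E h" and t: "twins V E x y" and "x \<noteq> y"
  shows "1 \<le> h x + h y"
proof -
  have V: "x \<in> V" "y \<in> V" using twinsD[OF t] .
  have "1 \<le> sum h (resolving_set_k k V E x y)"
    using h V \<open>x \<noteq> y\<close> unfolding k_trunc_resolving_function_def by blast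
  also have "\<dots> \<le> sum h {x, y}"
    using resolving_set_k_twins[OF assms(1,2) t] h V
    by (intro sum_mono2) (auto simp: k_trunc_resolving_function_def)
  finally show ?thesis using \<open>x \<noteq> y\<close> by simp
qed

lemma half_card_le_sum_if_matching:
  fixes h :: "'a \<Rightarrow> real"
  assumes fin: "finite V" and t: "\<And>x. x \<in> V \<Longrightarrow> t x \<in> V"
    and pair: "\<And>x. x \<in> V \<Longrightarrow> 1 \<le> h x + h (t x)"
    and inj: "inj_on t {x\<in>V. h x < 1/2}"
  shows "real (card V) / 2 \<le> sum h V"
proof -
  define g where "g x = h x - 1/2" for x
  define A where "A = {x\<in>V. h x < 1/2}"
  have tA: "t ` A \<subseteq> V - A"
    using t pair unfolding A_def by fastforce
  have "0 \<le> (\<Sum>x\<in>A. g x + g (t x))"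
    using pair unfolding A_def g_def by (auto intro: sum_nonneg)
  also have "\<dots> = sum g A + sum g (t ` A)"
    using inj unfolding A_def by (simp add: sum.distrib sum.reindex)
  also have "\<dots> \<le> sum g A + sum g (V - A)"
    using tA fin by (intro add_left_mono sum_mono2) (auto simp: A_def g_def)
  also have "\<dots> = sum g V"
    using sum.subset_diff[of A V g] fin unfolding A_def by simp
  also have "\<dots> = sum h V - real (card V) / 2"
    unfolding g_def by (simp add: sum_subtractf)
  finally show ?thesis by simp
qed

text \<open>Match each vertex with a twin. This is injective on vertices of weight below 1/2 because
  two such vertices cannot be twins of each other.\<close>
lemma sum_k_trunc_resolving_function_ge_half_card:
  assumes G: "simple_graph V E" and C: "graph_connected V E"
    and twin: "\<forall>x\<in>V. \<exists>y\<in>V. y \<noteq> x \<and> twins V E x y"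
    and h: "k_trunc_resolving_function k V E h"
  shows "real (card V) / 2 \<le> sum h V"
proof -
  obtain t where t: "\<And>x. x \<in> V \<Longrightarrow> t x \<in> V \<and> t x \<noteq> x \<and> twins V E x (t x)"
    using twin by metis
  have "1 \<le> h x + h (t x)" if "x \<in> V" for x
    using k_trunc_resolving_function_twins[OF G C h, of x "t x"] t[OF that] by auto
  moreover have "inj_on t {x\<in>V. h x < 1/2}"
  proof (rule inj_onI, rule ccontr)
    fix x x' assume light: "x \<in> {x\<in>V. h x < 1/2}" "x' \<in> {x\<in>V. h x < 1/2}"
      and "t x = t x'" "x \<noteq> x'"
    then have "twins V E x (t x)" "twins V E x' (t x)"
      using t[of x] t[of x'] by simp_all
    then have "twins V E x x'" using twins_trans[OF G] twins_sym by metis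
    then have "1 \<le> h x + h x'"
      using k_trunc_resolving_function_twins[OF G C h] \<open>x \<noteq> x'\<close> by blast
    then show False using light by simp
  qed
  ultimately show ?thesis
    using half_card_le_sum_if_matching[of V t h] simple_graphD(1)[OF G] t by blast
qed

lemma k_trunc_resolving_function_half:
  assumes G: "simple_graph V E" and C: "graph_connected V E"
  shows "k_trunc_resolving_function k V E (\<lambda>_. 1/2)"
  unfolding k_trunc_resolving_function_def
proof (intro conjI ballI impI)
  fix x y assume xy: "x \<in> V" "y \<in> V" "x \<noteq> y"
  have "(\<Sum>_\<in>{x, y}. 1/2) \<le> (\<Sum>_\<in>resolving_set_k k V E x y. (1/2 :: real))"
    using mem_resolving_set_k[OF G C xy]
      finite_subset[OF resolving_set_k_subset simple_graphD(1)[OF G]]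
    by (intro sum_mono2) auto
  then show "1 \<le> (\<Sum>_\<in>resolving_set_k k V E x y. (1/2 :: real))" using xy(3) by simp
qed auto

text \<open>Vertices without a twin only need weight 1/3: they are resolved from every other
  vertex by at least three vertices.\<close>
lemma k_trunc_resolving_function_third_on_twin_free:
  assumes G: "simple_graph V E" and C: "graph_connected V E" and "k \<ge> 1"
  shows "k_trunc_resolving_function k V E
           (\<lambda>x. if \<exists>y\<in>V. y \<noteq> x \<and> twins V E x y then 1/2 else 1/3)"
    (is "k_trunc_resolving_function k V E ?h")
  unfolding k_trunc_resolving_function_def
proof (intro conjI ballI impI)
  fix x y assume xy: "x \<in> V" "y \<in> V" "x \<noteq> y"
  let ?R = "resolving_set_k k V E x y"
  have finR: "finite ?R" using finite_subset[OF resolving_set_k_subset simple_graphD(1)[OF G]] .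
  have xyR: "x \<in> ?R" "y \<in> ?R" using mem_resolving_set_k[OF G C xy] .
  show "1 \<le> sum ?h ?R"
  proof (cases "twins V E x y")
    case True
    then have "?h x = 1/2" "?h y = 1/2"
      using xy twins_sym by fastforce+
    moreover have "sum ?h {x, y} \<le> sum ?h ?R"
      using finR xyR by (intro sum_mono2) auto
    ultimately show ?thesis using xy(3) by simp
  next
    case False
    then obtain z where "z \<in> ?R" "z \<noteq> x" "z \<noteq> y"
      using resolving_set_k_non_twins[OF G C \<open>k \<ge> 1\<close> xy(1,2)] by blast
    then have "sum ?h {x, y, z} \<le> sum ?h ?R"
      using finR xyR by (intro sum_mono2) auto
    moreover have "sum ?h {x, y, z} = ?h x + ?h y + ?h z"
      using xy(3) \<open>z \<noteq> x\<close> \<open>z \<noteq> y\<close> by simp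
    moreover have third: "1/3 \<le> ?h w" for w by simp
    ultimately show ?thesis using third[of x] third[of y] third[of z] by linarith
  qed
qed simp_all

lemma frac_trunc_dim_le:
  assumes "k_trunc_resolving_function k V E h"
  shows "frac_trunc_dim k V E \<le> sum h V"
  unfolding frac_trunc_dim_def
proof (rule cInf_lower)
  show "bdd_below {sum h V |h. k_trunc_resolving_function k V E h}"
    by (rule bdd_belowI[of _ 0]) (auto simp: k_trunc_resolving_function_def intro: sum_nonneg)
qed (use assms in blast)

lemma frac_trunc_dim_ge:
  assumes "k_trunc_resolving_function k V E h"
    and "\<And>h. k_trunc_resolving_function k V E h \<Longrightarrow> c \<le> sum h V"
  shows "c \<le> frac_trunc_dim k V E"
  unfolding frac_trunc_dim_def using assms by (intro cInf_greatest) auto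

lemma graph_connected_image:
  assumes G: "simple_graph V E" and C: "graph_connected V E" and H: "simple_graph (f ` V) F"
    and edge: "\<And>x y. E x y \<Longrightarrow> f x \<noteq> f y \<Longrightarrow> F (f x) (f y)"
  shows "graph_connected (f ` V) F"
proof -
  have "F\<^sup>*\<^sup>* (f x) (f y)" if "E\<^sup>*\<^sup>* x y" for x y
    using that
  proof induction
    case (step y z)
    then show ?case
      using edge[of y z] by (cases "f y = f z") (auto intro: rtranclp.rtrancl_into_rtrancl)
  qed simp
  then show ?thesis
    using C unfolding graph_connected_iff_rtranclp[OF G] graph_connected_iff_rtranclp[OF H]
    by blast
qed

lemma twins_adjacent_twin:
  assumes G: "simple_graph V E" and "twins V E x y" and "twins V E x z"
    and "y \<noteq> z" and "x \<noteq> z" and "E x y"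
  shows "E x z"
proof -
  have "twins V E y z" using twins_trans[OF G twins_sym[OF assms(2)] assms(3)] .
  moreover have "x \<in> V" "x \<noteq> y" using twinsD(1)[OF assms(2)] simple_graphD(5)[OF G] assms(6) by auto
  ultimately have "E y x \<longleftrightarrow> E z x" using assms(5) unfolding twins_def by blast
  then show ?thesis using assms(6) simple_graphD(4)[OF G] by metis
qed

lemma twin_class_clique_or_independent:
  fixes a :: 'a
  assumes G: "simple_graph V E"
  defines "C \<equiv> {x\<in>V. twins V E a x}"
  shows "(\<forall>x\<in>C. \<forall>y\<in>C. x \<noteq> y \<longrightarrow> E x y) \<or> (\<forall>x\<in>C. \<forall>y\<in>C. \<not> E x y)"
proof (rule disjCI)
  have twinsC: "twins V E x y" if "x \<in> C" "y \<in> C" for x y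
  proof -
    have "twins V E a x" "twins V E a y" using that unfolding C_def by auto
    then show ?thesis by (rule twins_trans[OF G twins_sym])
  qed
  assume "\<not> (\<forall>x\<in>C. \<forall>y\<in>C. \<not> E x y)"
  then obtain b c where "b \<in> C" "c \<in> C" "E b c" by blast
  have from_b: "E b w" if "w \<in> C" "w \<noteq> b" for w
    using twins_adjacent_twin[OF G twinsC[OF \<open>b \<in> C\<close> \<open>c \<in> C\<close>] twinsC[OF \<open>b \<in> C\<close> that(1)]]
      \<open>E b c\<close> that(2) by (cases "w = c") auto
  show "\<forall>x\<in>C. \<forall>y\<in>C. x \<noteq> y \<longrightarrow> E x y"
  proof (intro ballI impI)
    fix x y assume "x \<in> C" "y \<in> C" "x \<noteq> y"
    consider "x = b" | "y = b" | "x \<noteq> b" "y \<noteq> b" by blast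
    then show "E x y"
    proof cases
      case 3
      then have "E x b" using from_b[OF \<open>x \<in> C\<close>] simple_graphD(4)[OF G] by metis
      then show ?thesis
        using twins_adjacent_twin[OF G twinsC[OF \<open>x \<in> C\<close> \<open>b \<in> C\<close>] twinsC[OF \<open>x \<in> C\<close> \<open>y \<in> C\<close>]]
          3 \<open>x \<noteq> y\<close> by blast
    qed (use from_b \<open>x \<in> C\<close> \<open>y \<in> C\<close> \<open>x \<noteq> y\<close> simple_graphD(4)[OF G] in auto)
  qed
qed

lemma twins_adjacent_cong:
  assumes G: "simple_graph V E" and "twins V E a a'" and "twins V E b b'" and "\<not> twins V E a b"
  shows "E a b \<longleftrightarrow> E a' b'"
proof -
  have V: "a \<in> V" "a' \<in> V" "b \<in> V" "b' \<in> V" using assms(2,3) twinsD by metis+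
  have "\<not> twins V E a' b" "\<not> twins V E a' b'"
    using assms(4) twins_trans[OF G assms(2)] twins_trans[OF G _ twins_sym[OF assms(3)]] by metis+
  then have "a \<noteq> b" "a' \<noteq> b" "a' \<noteq> b'"
    using assms(4) twins_refl V by metis+
  then have "E a b \<longleftrightarrow> E a' b" "E b a' \<longleftrightarrow> E b' a'"
    using assms(2,3) V unfolding twins_def by (metis, metis)
  then show ?thesis using simple_graphD(4)[OF G] by metis
qed

definition twin_rep :: "'a set \<Rightarrow> ('a \<Rightarrow> 'a \<Rightarrow> bool) \<Rightarrow> 'a \<Rightarrow> 'a" where
  "twin_rep V E x = (SOME y. twins V E x y)"

lemma twins_twin_rep:
  assumes "x \<in> V"
  shows "twins V E x (twin_rep V E x)"
  unfolding twin_rep_def using twins_refl[OF assms] by (rule someI)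

lemma twin_rep_eq_iff:
  assumes G: "simple_graph V E" and "x \<in> V" and "y \<in> V"
  shows "twin_rep V E x = twin_rep V E y \<longleftrightarrow> twins V E x y"
proof
  assume "twin_rep V E x = twin_rep V E y"
  then have "twins V E x (twin_rep V E y)" using twins_twin_rep[OF assms(2)] by metis
  then show "twins V E x y" by (rule twins_trans[OF G _ twins_sym[OF twins_twin_rep[OF assms(3)]]])
next
  assume xy: "twins V E x y"
  have "twins V E x = twins V E y"
  proof (intro ext iffI)
    fix z
    show "twins V E x z \<Longrightarrow> twins V E y z" by (rule twins_trans[OF G twins_sym[OF xy]])
    show "twins V E y z \<Longrightarrow> twins V E x z" by (rule twins_trans[OF G xy])
  qed
  then show "twin_rep V E x = twin_rep V E y" unfolding twin_rep_def by simp
qed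

text \<open>H is the subgraph induced by one representative of each twin class.\<close>
lemma twins_imp_in_blowup_family:
  assumes G: "simple_graph V E" and C: "graph_connected V E"
    and twin: "\<forall>x\<in>V. \<exists>y\<in>V. y \<noteq> x \<and> twins V E x y"
  shows "in_blowup_family V E"
proof -
  let ?r = "twin_rep V E"
  define VH where "VH = ?r ` V"
  define EH where "EH u v \<longleftrightarrow> E u v \<and> u \<in> VH \<and> v \<in> VH" for u v
  have "?r x \<in> V" if "x \<in> V" for x using twinsD(2)[OF twins_twin_rep[OF that]] .
  then have H: "simple_graph VH EH"
    using simple_graphD[OF G] unfolding simple_graph_def EH_def VH_def by auto
  have cross: "E x y \<longleftrightarrow> EH (?r x) (?r y)" if "x \<in> V" "y \<in> V" "?r x \<noteq> ?r y" for x y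
    using twins_adjacent_cong[OF G twins_twin_rep[OF that(1)] twins_twin_rep[OF that(2)]]
      twin_rep_eq_iff[OF G that(1,2)] that unfolding EH_def VH_def by auto
  have "graph_connected VH EH"
    unfolding VH_def
  proof (rule graph_connected_image[OF G C H[unfolded VH_def]])
    fix x y assume "E x y" "?r x \<noteq> ?r y"
    then show "EH (?r x) (?r y)" using cross simple_graphD(2,3)[OF G] by blast
  qed
  moreover have "card {x\<in>V. ?r x = u} \<ge> 2
      \<and> ((\<forall>x\<in>V. \<forall>y\<in>V. ?r x = u \<and> ?r y = u \<and> x \<noteq> y \<longrightarrow> E x y)
         \<or> (\<forall>x\<in>V. \<forall>y\<in>V. ?r x = u \<and> ?r y = u \<longrightarrow> \<not> E x y))" if "u \<in> VH" for u
  proof -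
    obtain a where "a \<in> V" and u: "u = ?r a" using \<open>u \<in> VH\<close> unfolding VH_def by blast
    then have fibre: "?r x = u \<longleftrightarrow> twins V E a x" if "x \<in> V" for x
      using twin_rep_eq_iff[OF G _ that] twins_sym by metis
    obtain b where "b \<in> V" "b \<noteq> a" "twins V E a b" using twin \<open>a \<in> V\<close> by blast
    then have "card {a, b} \<le> card {x\<in>V. ?r x = u}"
      using fibre \<open>a \<in> V\<close> twins_refl simple_graphD(1)[OF G] by (intro card_mono) auto
    then show ?thesis
      using \<open>b \<noteq> a\<close> twin_class_clique_or_independent[OF G, of a] by (simp add: fibre) blast
  qed
  ultimately show ?thesis
    unfolding in_blowup_family_def
    by (intro exI[of _ VH] exI[of _ EH] exI[of _ ?r]) (use H cross VH_def in blast)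
qed

lemma in_blowup_family_imp_twins:
  assumes G: "simple_graph V E" and "in_blowup_family V E" and "x \<in> V"
  obtains y where "y \<in> V" "y \<noteq> x" "twins V E x y"
proof -
  obtain VH EH and \<phi> :: "'a \<Rightarrow> 'a" where "\<phi> ` V = VH"
    and fibre: "\<forall>u\<in>VH. card {x\<in>V. \<phi> x = u} \<ge> 2
        \<and> ((\<forall>x\<in>V. \<forall>y\<in>V. \<phi> x = u \<and> \<phi> y = u \<and> x \<noteq> y \<longrightarrow> E x y)
           \<or> (\<forall>x\<in>V. \<forall>y\<in>V. \<phi> x = u \<and> \<phi> y = u \<longrightarrow> \<not> E x y))"
    and cross: "\<forall>x\<in>V. \<forall>y\<in>V. \<phi> x \<noteq> \<phi> y \<longrightarrow> (E x y \<longleftrightarrow> EH (\<phi> x) (\<phi> y))"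
    using assms(2) unfolding in_blowup_family_def by blast
  then have "\<phi> x \<in> VH" using \<open>x \<in> V\<close> by blast
  let ?F = "{z\<in>V. \<phi> z = \<phi> x}"
  have "\<not> card ?F \<le> Suc 0" using fibre \<open>\<phi> x \<in> VH\<close> by fastforce
  then obtain y where "y \<in> ?F" "y \<noteq> x"
    using card_le_Suc0_iff_eq[of ?F] simple_graphD(1)[OF G] \<open>x \<in> V\<close> by auto
  moreover have "E x z \<longleftrightarrow> E y z" if "z \<in> V" "z \<noteq> x" "z \<noteq> y" for z
  proof (cases "\<phi> z = \<phi> x")
    case True
    then show ?thesis using fibre \<open>\<phi> x \<in> VH\<close> \<open>x \<in> V\<close> \<open>y \<in> ?F\<close> that by blast
  next
    case False
    then show ?thesis using cross \<open>x \<in> V\<close> \<open>y \<in> ?F\<close> that by auto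
  qed
  ultimately show ?thesis using that \<open>x \<in> V\<close> unfolding twins_def by blast
qed

lemma in_blowup_family_iff_twins:
  assumes "simple_graph V E" and "graph_connected V E"
  shows "in_blowup_family V E \<longleftrightarrow> (\<forall>x\<in>V. \<exists>y\<in>V. y \<noteq> x \<and> twins V E x y)"
  using twins_imp_in_blowup_family[OF assms] in_blowup_family_imp_twins[OF assms(1)] by metis

lemma frac_trunc_dim_eq_half_card_iff_twins:
  assumes G: "simple_graph V E" and C: "graph_connected V E" and "k \<ge> 1"
  shows "frac_trunc_dim k V E = real (card V) / 2 \<longleftrightarrow> (\<forall>x\<in>V. \<exists>y\<in>V. y \<noteq> x \<and> twins V E x y)"
proof
  assume dim: "frac_trunc_dim k V E = real (card V) / 2"
  show "\<forall>x\<in>V. \<exists>y\<in>V. y \<noteq> x \<and> twins V E x y"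
  proof (rule ccontr)
    let ?h = "\<lambda>x. if \<exists>y\<in>V. y \<noteq> x \<and> twins V E x y then 1/2 else 1/3 :: real"
    assume "\<not> (\<forall>x\<in>V. \<exists>y\<in>V. y \<noteq> x \<and> twins V E x y)"
    then obtain v where "v \<in> V" "\<not> (\<exists>y\<in>V. y \<noteq> v \<and> twins V E v y)" by blast
    then have "sum ?h V < (\<Sum>_\<in>V. 1/2)"
      by (intro sum_strict_mono_ex1[OF simple_graphD(1)[OF G]]) (auto intro!: bexI[of _ v])
    then have "frac_trunc_dim k V E < real (card V) / 2"
      using frac_trunc_dim_le[OF k_trunc_resolving_function_third_on_twin_free[OF G C \<open>k \<ge> 1\<close>]]
      by simp
    then show False using dim by simp
  qed
next
  assume "\<forall>x\<in>V. \<exists>y\<in>V. y \<noteq> x \<and> twins V E x y"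
  then have "real (card V) / 2 \<le> frac_trunc_dim k V E"
    using frac_trunc_dim_ge[OF k_trunc_resolving_function_half[OF G C]]
      sum_k_trunc_resolving_function_ge_half_card[OF G C] by blast
  moreover have "frac_trunc_dim k V E \<le> real (card V) / 2"
    using frac_trunc_dim_le[OF k_trunc_resolving_function_half[OF G C]] by simp
  ultimately show "frac_trunc_dim k V E = real (card V) / 2" by simp
qed

theorem corollary2p9:
  fixes V :: "'a set" and E :: "'a \<Rightarrow> 'a \<Rightarrow> bool" and k :: nat
  assumes "simple_graph V E" and "graph_connected V E" and "card V \<ge> 2" and "k \<ge> 1"
  shows "frac_trunc_dim k V E = real (card V) / 2 \<longleftrightarrow> in_blowup_family V E"
  using frac_trunc_dim_eq_half_card_iff_twins[OF assms(1,2,4)]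
    in_blowup_family_iff_twins[OF assms(1,2)] by simp

end
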